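(* Let $\beta\in(-\tfrac12,\tfrac12)$. Then there is a constant $D$ depending only on $\beta$ such that, for all sufficiently large positive integers $n$ and all $z\in\mathbb{C}$, $$\left|n^{\frac12-\beta}\,C_{4n}^{(\beta+1/2)}\!\left(\frac{z}{4n}\right)\right|\le D\cosh(2|z|).$$ Moreover, $$\lim_{n\to\infty}(2n)^{1/2-\beta}\,\Gamma\!\left(\beta+\tfrac12\right)C_{4n}^{(\beta+1/2)}\!\left(\frac{z}{4n}\right)=\cos(z),$$ and the convergence is uniform on every compact subset of $\mathbb{C}$.
   Context: For $a\in\mathbb{C}$ and integer $k\ge0$, $(a)_k=\Gamma(a+k)/\Gamma(a)$ denotes the shifted factorial. For $\lambda>0$ and integer $m\ge0$, the ultraspherical (Gegenbauer) polynomial is $$C_m^{(\lambda)}(x)=\frac{(2\lambda)_m}{m!}\sum_{k=0}^{m}\frac{(-m)_k(m+2\lambda)_k}{(\lambda+\frac12)_k\,k!}\left(\frac{1-x}{2}\right)^k.$$ *)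

theory Defs
  imports "HOL-Analysis.Analysis"
begin

definition gegenbauer :: "real \<Rightarrow> nat \<Rightarrow> complex \<Rightarrow> complex" where
  "gegenbauer lam m x =
     (pochhammer (complex_of_real (2 * lam)) m / fact m) *
     (\<Sum>k = 0..m. pochhammer (- of_nat m) k * pochhammer (of_nat m + complex_of_real (2 * lam)) k
        / (pochhammer (complex_of_real (lam + 1/2)) k * fact k) * ((1 - x) / 2) ^ k)"

end

theory Submission
  imports Defs
begin

text \<open>Differentiation lowers the degree and raises the parameter, \<open>d/dx C_m^a = 2a C_(m-1)^(a+1)\<close>,
  so the Taylor coefficients of \<open>C_m^a\<close> at 0 are \<open>2^j (a)_j / j! * C_(m-j)^(a+j)(0)\<close>. The
  differential equation at 0 gives \<open>C_2k^a(0) = (-1)^k (a)_k / k!\<close> and \<open>C_(2k+1)^a(0) = 0\<close>.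
  Hence \<open>(2n) powr (1-l) * \<Gamma>(l) * C_4n^l(z/4n)\<close> is the cosine series, truncated at degree \<open>4n\<close>,
  with the coefficient of \<open>z^(2i)\<close> multiplied by a weight \<open>w(n,i)\<close>. Each weight tends to 1
  (for \<open>i = 0\<close> by Gauss's product formula for \<open>\<Gamma>\<close>), and for \<open>l \<le> 1\<close> the ratio
  \<open>w(n,i+1)/w(n,i) \<le> 2\<close> dominates the series by \<open>B * exp(2|z|)\<close>. Tannery's theorem then gives
  uniform convergence on compact sets, and \<open>exp(2|z|) \<le> 2 cosh(2|z|)\<close> the bound.\<close>

lemma smult_sum_right: "smult c (sum f A) = (\<Sum>x\<in>A. smult c (f x))"
  by (induction A rule: infinite_finite_induct) (auto simp: smult_add_right)

lemma pderiv_sum: "pderiv (sum f A) = (\<Sum>x\<in>A. pderiv (f x))"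
  using higher_pderiv_sum[of 1 f A] by simp

lemma poly_eq_sum_coeff:
  fixes p :: "'a::comm_semiring_1 poly"
  assumes "degree p \<le> m"
  shows "poly p x = (\<Sum>j\<le>m. coeff p j * x^j)"
  by (subst poly_as_sum_of_monoms'[OF assms, symmetric]) (simp add: poly_sum poly_monom)

lemma sum_power_div_fact_le_exp:
  fixes x :: real
  assumes "finite A" "0 \<le> x"
  shows "(\<Sum>j\<in>A. x^j / fact j) \<le> exp x"
proof -
  have "(\<lambda>j. x^j / fact j) sums exp x"
    using exp_converges[of x] by (simp add: divide_inverse mult.commute)
  then have "(\<Sum>j\<in>A. x^j / fact j) \<le> (\<Sum>j. x^j / fact j)"
    using assms by (intro sum_le_suminf sums_summable) auto
  also have "\<dots> = exp x"
    using \<open>(\<lambda>j. x^j / fact j) sums exp x\<close> by (rule sums_unique[symmetric])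
  finally show ?thesis .
qed

lemma summable_mult_power_div_fact: "summable (\<lambda>k. c * x^k / fact k :: real)"
  using summable_mult[OF summable_exp[of x], of c] by (simp add: divide_inverse mult_ac)

section \<open>Taylor coefficients of Gegenbauer polynomials\<close>

text \<open>The Gegenbauer polynomial with complex parameter \<open>a\<close>, as a polynomial in \<open>(1 - x)/2\<close>.
  Under \<open>Re a > 0\<close> no denominator \<open>(a + 1/2)_k\<close> vanishes.\<close>

definition gegenbauer_coeff :: "complex \<Rightarrow> nat \<Rightarrow> nat \<Rightarrow> complex" where
  "gegenbauer_coeff a m k =
     pochhammer (2*a) m / fact m * pochhammer (- of_nat m) k * pochhammer (of_nat m + 2*a) k
       / (pochhammer (a + 1/2) k * fact k)"

definition gegenbauer_poly :: "complex \<Rightarrow> nat \<Rightarrow> complex poly" where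
  "gegenbauer_poly a m = (\<Sum>k\<le>m. smult (gegenbauer_coeff a m k) ([:1/2, -1/2:] ^ k))"

lemma gegenbauer_eq_poly: "gegenbauer lam m x = poly (gegenbauer_poly (of_real lam) m) x"
  by (simp add: gegenbauer_def gegenbauer_poly_def gegenbauer_coeff_def poly_sum
      atLeast0AtMost sum_distrib_left mult_ac of_real_add diff_divide_distrib)

lemma degree_gegenbauer_poly: "degree (gegenbauer_poly a m) \<le> m"
  unfolding gegenbauer_poly_def
  by (intro degree_sum_le) (auto intro: order.trans[OF degree_smult_le] order.trans[OF degree_power_le])

lemma pochhammer_plus_half_nonzero:
  assumes "Re a > 0" shows "pochhammer (a + 1/2) k \<noteq> (0::complex)"
proof
  assume "pochhammer (a + 1/2) k = 0"
  then obtain j where "a + 1/2 = - of_nat j" by (auto simp: pochhammer_eq_0_iff)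
  then have "Re (a + 1/2) = Re (- of_nat j)" by simp
  with assms show False by simp
qed

lemma gegenbauer_coeff_Suc_Suc:
  assumes "Re a > 0"
  shows "gegenbauer_coeff a (Suc m) (Suc k) * (- of_nat (Suc k) / 2) = 2*a * gegenbauer_coeff (a+1) m k"
proof -
  define P Q R T where "P = pochhammer (2*(a+1)) m" and "Q = pochhammer (- of_nat m :: complex) k"
    and "R = pochhammer (of_nat m + 2*(a+1)) k" and "T = pochhammer (a + 1 + 1/2) k"
  define h s where "h = a + 1/2" and "s = of_nat (Suc m) + 2*a"
  have nz: "h \<noteq> 0" "s \<noteq> 0" using assms by (auto simp: complex_eq_iff h_def s_def)
  have T: "T \<noteq> 0" using pochhammer_plus_half_nonzero[of "a+1" k] assms by (simp add: T_def)
  have "pochhammer (2*a+1) m * s = 2*h * P"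
    using pochhammer_rec[of "2*a+1" m] pochhammer_rec'[of "2*a+1" m]
    by (simp add: P_def s_def h_def algebra_simps)
  then have e1: "pochhammer (2*a) (Suc m) = 2*a * (2*h * P / s)"
    using nz by (simp add: pochhammer_rec eq_divide_eq mult.commute)
  have e2: "pochhammer (- of_nat (Suc m)) (Suc k) = - of_nat (Suc m) * Q"
    by (simp add: pochhammer_rec Q_def)
  have e3: "pochhammer (of_nat (Suc m) + 2*a) (Suc k) = s * R"
    by (simp add: pochhammer_rec R_def s_def algebra_simps)
  have e4: "pochhammer (a + 1/2) (Suc k) = h * T"
    by (simp add: pochhammer_rec T_def h_def algebra_simps)
  show ?thesis
    unfolding gegenbauer_coeff_def e1 e2 e3 e4 fact_Suc
      P_def[symmetric] Q_def[symmetric] R_def[symmetric] T_def[symmetric]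
    using nz T of_nat_neq_0[of k] of_nat_neq_0[of m] by (simp add: field_simps del: of_nat_Suc)
qed

lemma gegenbauer_coeff_Suc:
  assumes "Re a > 0"
  shows "gegenbauer_coeff a m (Suc k) * (of_nat (Suc k) * (a + 1/2 + of_nat k))
       = gegenbauer_coeff a m k * ((of_nat k - of_nat m) * (of_nat m + 2*a + of_nat k))"
proof -
  define h where "h = a + 1/2 + of_nat k"
  have "h \<noteq> 0" using assms by (auto simp: complex_eq_iff h_def)
  moreover have "pochhammer (a + 1/2) (Suc k) = h * pochhammer (a + 1/2) k"
    by (simp add: pochhammer_rec' h_def)
  ultimately show ?thesis
    using pochhammer_plus_half_nonzero[OF assms, of k] of_nat_neq_0[of k]
    unfolding gegenbauer_coeff_def h_def[symmetric]
    by (simp add: pochhammer_rec' fact_Suc field_simps del: of_nat_Suc)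
qed

lemma pderiv_half_one_minus_power:
  "pderiv ([:1/2, -1/2:] ^ Suc k :: complex poly) = smult (- of_nat (Suc k) / 2) ([:1/2, -1/2:] ^ k)"
proof -
  have "pderiv ([:1/2, -1/2:] ^ Suc k :: complex poly) = smult (of_nat (Suc k)) ([:1/2, -1/2:] ^ k) * [:-1/2:]"
    by (simp only: pderiv_power diff_Suc_1) (simp add: pderiv_pCons)
  also have "\<dots> = smult (of_nat (Suc k) * (-1/2)) ([:1/2, -1/2:] ^ k)"
    by (simp only: mult.commute[of _ "[:-1/2:]"] mult_smult_right mult_pCons_left mult_zero_left
        pCons_0_0 add_0_right smult_smult)
  also have "of_nat (Suc k) * (-1/2) = (- of_nat (Suc k) / 2 :: complex)"
    by (simp add: field_simps)
  finally show ?thesis .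
qed

lemma pderiv_gegenbauer_poly:
  assumes "Re a > 0"
  shows "pderiv (gegenbauer_poly a (Suc m)) = smult (2*a) (gegenbauer_poly (a+1) m)"
proof -
  have "pderiv (gegenbauer_poly a (Suc m))
      = (\<Sum>k\<le>Suc m. smult (gegenbauer_coeff a (Suc m) k) (pderiv ([:1/2, -1/2:] ^ k)))"
    by (simp only: gegenbauer_poly_def pderiv_sum pderiv_smult)
  also have "\<dots> = (\<Sum>k\<le>m. smult (gegenbauer_coeff a (Suc m) (Suc k)) (pderiv ([:1/2, -1/2:] ^ Suc k)))"
    by (simp only: sum.atMost_Suc_shift power_0 pderiv_1 smult_0_right add_0_left)
  also have "\<dots> = (\<Sum>k\<le>m. smult (2*a) (smult (gegenbauer_coeff (a+1) m k) ([:1/2, -1/2:] ^ k)))"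
    by (simp only: pderiv_half_one_minus_power smult_smult gegenbauer_coeff_Suc_Suc[OF assms])
  also have "\<dots> = smult (2*a) (gegenbauer_poly (a+1) m)"
    by (simp only: gegenbauer_poly_def smult_sum_right)
  finally show ?thesis .
qed

lemma higher_pderiv_gegenbauer_poly:
  assumes "Re a > 0" "j \<le> m"
  shows "(pderiv ^^ j) (gegenbauer_poly a m) = smult (2^j * pochhammer a j) (gegenbauer_poly (a + of_nat j) (m - j))"
  using assms(2)
proof (induction j)
  case 0 then show ?case by simp
next
  case (Suc j)
  have re: "Re (a + of_nat j) > 0" using assms(1) by simp
  have m: "m - j = Suc (m - Suc j)" using Suc.prems by simp
  have "(pderiv ^^ Suc j) (gegenbauer_poly a m)
      = pderiv (smult (2^j * pochhammer a j) (gegenbauer_poly (a + of_nat j) (Suc (m - Suc j))))"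
    using Suc by (simp only: funpow.simps comp_apply m Suc_leD)
  also have "\<dots> = smult (2^j * pochhammer a j * (2 * (a + of_nat j))) (gegenbauer_poly (a + of_nat j + 1) (m - Suc j))"
    by (simp only: pderiv_smult pderiv_gegenbauer_poly[OF re] smult_smult)
  also have "\<dots> = smult (2^Suc j * pochhammer a (Suc j)) (gegenbauer_poly (a + of_nat (Suc j)) (m - Suc j))"
    by (simp add: pochhammer_rec' algebra_simps)
  finally show ?case .
qed

lemma coeff_gegenbauer_poly:
  assumes "Re a > 0" "j \<le> m"
  shows "coeff (gegenbauer_poly a m) j = 2^j * pochhammer a j / fact j * poly (gegenbauer_poly (a + of_nat j) (m - j)) 0"
proof -
  have "fact j * coeff (gegenbauer_poly a m) j = coeff ((pderiv ^^ j) (gegenbauer_poly a m)) 0"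
    by (simp add: coeff_higher_pderiv pochhammer_fact)
  then show ?thesis
    by (simp add: higher_pderiv_gegenbauer_poly[OF assms] poly_0_coeff_0 field_simps)
qed

text \<open>The Gegenbauer differential equation
  \<open>(1 - x\<^sup>2) y'' - (2a + 1) x y' + m (m + 2a) y = 0\<close> at \<open>x = 0\<close>; in terms of the coefficients it is a
  telescoping sum.\<close>

lemma poly_pderiv2_gegenbauer_poly_0:
  assumes "Re a > 0"
  shows "poly (pderiv (pderiv (gegenbauer_poly a m))) 0 = - (of_nat m * (of_nat m + 2*a) * poly (gegenbauer_poly a m) 0)"
proof -
  define c where "c k = gegenbauer_coeff a m k * (1/2)^k" for k
  have pderiv2: "poly (pderiv (pderiv ([:1/2, -1/2:] ^ k))) 0 = (of_nat k * (of_nat k - 1) * (1/2)^k :: complex)" for k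
  proof -
    consider "k = 0" | "k = 1" | i where "k = Suc (Suc i)"
      by (metis One_nat_def not0_implies_Suc)
    then show ?thesis
    proof cases
      case 3
      then show ?thesis
        by (simp only: pderiv_half_one_minus_power pderiv_smult poly_smult poly_power)
          (simp add: field_simps)
    qed (simp_all add: pderiv_pCons)
  qed
  define g where "g k = 2 * of_nat k * (1/2 - a - of_nat k) * c k" for k
  have "g (Suc k) - g k = c k * (of_nat k * (of_nat k - 1) + of_nat m * (of_nat m + 2*a))" for k
  proof -
    have "g (Suc k) = - ((1/2)^k) * (gegenbauer_coeff a m (Suc k) * (of_nat (Suc k) * (a + 1/2 + of_nat k)))"
      by (simp add: g_def c_def field_simps)
    then show ?thesis
      unfolding gegenbauer_coeff_Suc[OF assms] by (simp add: g_def c_def algebra_simps)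
  qed
  then have "(\<Sum>k\<le>m. c k * (of_nat k * (of_nat k - 1) + of_nat m * (of_nat m + 2*a))) = g (Suc m) - g 0"
    using sum_Suc_diff[of 0 m g] by (simp add: atLeast0AtMost)
  also have "\<dots> = 0"
    by (simp add: g_def c_def gegenbauer_coeff_def pochhammer_of_nat_eq_0_iff)
  finally have "(\<Sum>k\<le>m. c k * (of_nat k * (of_nat k - 1))) + of_nat m * (of_nat m + 2*a) * (\<Sum>k\<le>m. c k) = 0"
    by (simp add: distrib_left sum.distrib sum_distrib_right mult.commute)
  moreover have "poly (pderiv (pderiv (gegenbauer_poly a m))) 0 = (\<Sum>k\<le>m. c k * (of_nat k * (of_nat k - 1)))"
    by (simp only: gegenbauer_poly_def pderiv_sum pderiv_smult poly_sum poly_smult pderiv2) (simp add: c_def mult_ac)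
  moreover have "poly (gegenbauer_poly a m) 0 = (\<Sum>k\<le>m. c k)"
    by (simp add: gegenbauer_poly_def poly_sum c_def)
  ultimately show ?thesis
    by (simp add: eq_neg_iff_add_eq_0)
qed

lemma poly_gegenbauer_poly_0_Suc_Suc:
  assumes "Re a > 0"
  shows "of_nat (Suc (Suc m)) * (of_nat (Suc (Suc m)) + 2*a) * poly (gegenbauer_poly a (Suc (Suc m))) 0
       = - (4*a*(a+1) * poly (gegenbauer_poly (a+2) m) 0)"
proof -
  have "Re (a+1) > 0" using assms by simp
  then have "pderiv (pderiv (gegenbauer_poly a (Suc (Suc m)))) = smult (2*a * (2*(a+1))) (gegenbauer_poly (a+2) m)"
    by (simp add: pderiv_gegenbauer_poly[OF assms] pderiv_smult pderiv_gegenbauer_poly add.assoc)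
  then have "poly (pderiv (pderiv (gegenbauer_poly a (Suc (Suc m))))) 0 = 4*a*(a+1) * poly (gegenbauer_poly (a+2) m) 0"
    by (simp add: algebra_simps)
  then show ?thesis
    using poly_pderiv2_gegenbauer_poly_0[OF assms, of "Suc (Suc m)"] by (metis minus_minus)
qed

lemma neg_one_power_pochhammer_div_fact_recurrence:
  fixes a :: complex
  shows "of_nat (Suc (Suc (2*k))) * (of_nat (Suc (Suc (2*k))) + 2*a) * ((-1)^Suc k * pochhammer a (Suc k) / fact (Suc k))
    = - (4*a*(a+1) * ((-1)^k * pochhammer (a+2) k / fact k))"
proof -
  define S where "S = (of_nat (Suc k) :: complex)"
  have "S \<noteq> 0" unfolding S_def by (rule of_nat_neq_0)
  moreover have "of_nat (Suc (Suc (2*k))) * (of_nat (Suc (Suc (2*k))) + 2*a) = 4 * S * (a + S)"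
    by (simp add: S_def algebra_simps)
  ultimately have "of_nat (Suc (Suc (2*k))) * (of_nat (Suc (Suc (2*k))) + 2*a) * ((-1)^Suc k * pochhammer a (Suc k) / fact (Suc k))
      = - (4 * (-1)^k * (pochhammer a (Suc k) * (a + S)) / fact k)"
    unfolding fact_Suc[where 'a=complex, of k, folded S_def] by (simp add: field_simps)
  also have "pochhammer a (Suc k) * (a + S) = a * (a+1) * pochhammer (a+2) k"
    using pochhammer_rec'[of a "Suc k"] pochhammer_rec[of a "Suc k"] pochhammer_rec[of "a+1" k]
    by (simp add: S_def algebra_simps)
  finally show ?thesis
    by (simp add: mult_ac)
qed

lemma poly_gegenbauer_poly_0:
  assumes "Re a > 0"
  shows "poly (gegenbauer_poly a (2*k)) 0 = (-1)^k * pochhammer a k / fact k"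
    and "poly (gegenbauer_poly a (Suc (2*k))) 0 = 0"
proof -
  have "poly (gegenbauer_poly a (2*k)) 0 = (-1)^k * pochhammer a k / fact k
      \<and> poly (gegenbauer_poly a (Suc (2*k))) 0 = 0"
    using assms
  proof (induction k arbitrary: a)
    case 0
    then have "a + 1/2 \<noteq> 0" "2 + a*4 \<noteq> 0" by (auto simp: complex_eq_iff)
    then show ?case
      by (simp add: gegenbauer_poly_def gegenbauer_coeff_def field_simps)
  next
    case (Suc k)
    have "Re (a+2) > 0" using Suc.prems by simp
    note IH = Suc.IH[OF this]
    define N where "N j = of_nat (Suc (Suc j)) * (of_nat (Suc (Suc j)) + 2*a)" for j
    have N: "N j \<noteq> 0" for j using Suc.prems by (auto simp: complex_eq_iff N_def)
    have rec: "N j * poly (gegenbauer_poly a (Suc (Suc j))) 0 = - (4*a*(a+1) * poly (gegenbauer_poly (a+2) j) 0)" for j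
      unfolding N_def by (rule poly_gegenbauer_poly_0_Suc_Suc[OF Suc.prems])
    have "N (2*k) * ((-1)^Suc k * pochhammer a (Suc k) / fact (Suc k))
        = - (4*a*(a+1) * ((-1)^k * pochhammer (a+2) k / fact k))"
      unfolding N_def by (rule neg_one_power_pochhammer_div_fact_recurrence)
    then have "N (2*k) * poly (gegenbauer_poly a (2 * Suc k)) 0
        = N (2*k) * ((-1)^Suc k * pochhammer a (Suc k) / fact (Suc k))"
      using rec[of "2*k"] IH by simp
    then have even: "poly (gegenbauer_poly a (2 * Suc k)) 0 = (-1)^Suc k * pochhammer a (Suc k) / fact (Suc k)"
      using mult_left_cancel[OF N] by blast
    have "poly (gegenbauer_poly a (Suc (2 * Suc k))) 0 = 0"
      using rec[of "Suc (2*k)"] IH N[of "Suc (2*k)"] by simp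
    with even show ?case ..
  qed
  then show "poly (gegenbauer_poly a (2*k)) 0 = (-1)^k * pochhammer a k / fact k"
    and "poly (gegenbauer_poly a (Suc (2*k))) 0 = 0" by blast+
qed

lemma coeff_gegenbauer_poly_even:
  assumes "Re a > 0" "i \<le> M"
  shows "coeff (gegenbauer_poly a (2*M)) (2*i) = (-1)^(M-i) * 2^(2*i) * pochhammer a (M+i) / (fact (2*i) * fact (M-i))"
proof -
  have "Re (a + of_nat (2*i)) > 0" "2*M - 2*i = 2*(M-i)" using assms by simp_all
  then have "coeff (gegenbauer_poly a (2*M)) (2*i)
      = 2^(2*i) * pochhammer a (2*i) / fact (2*i) * ((-1)^(M-i) * pochhammer (a + of_nat (2*i)) (M-i) / fact (M-i))"
    using assms by (simp add: coeff_gegenbauer_poly poly_gegenbauer_poly_0(1))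
  also have "\<dots> = (-1)^(M-i) * 2^(2*i) * (pochhammer a (2*i) * pochhammer (a + of_nat (2*i)) (M-i))
      / (fact (2*i) * fact (M-i))"
    by (simp add: field_simps)
  also have "pochhammer a (2*i) * pochhammer (a + of_nat (2*i)) (M-i) = pochhammer a (M+i)"
    using pochhammer_product'[of a "2*i" "M-i"] assms by (simp add: ac_simps)
  finally show ?thesis .
qed

lemma coeff_gegenbauer_poly_odd:
  assumes "Re a > 0"
  shows "coeff (gegenbauer_poly a (2*M)) (Suc (2*i)) = 0"
proof (cases "Suc (2*i) \<le> 2*M")
  case True
  then have "2*M - Suc (2*i) = Suc (2*(M - Suc i))" by simp
  moreover have "Re (a + of_nat (Suc (2*i))) > 0" using assms by simp
  ultimately show ?thesis
    using True assms by (simp add: coeff_gegenbauer_poly poly_gegenbauer_poly_0(2))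
next
  case False
  then show ?thesis
    using degree_gegenbauer_poly[of a "2*M"] by (simp add: coeff_eq_0)
qed

section \<open>Comparison with the cosine series\<close>

text \<open>The factor by which the coefficient of \<open>z^(2i)\<close> in \<open>(2n) powr (1-l) * \<Gamma>(l) * C_4n^l(z/4n)\<close>
  differs from that of \<open>cos z\<close>; it is zero beyond the degree \<open>4n\<close>.\<close>

definition cos_weight :: "real \<Rightarrow> nat \<Rightarrow> nat \<Rightarrow> real" where
  "cos_weight l n i =
     (if i \<le> 2*n then Gamma l * (2*real n) powr (1-l) * pochhammer l (2*n+i) / (fact (2*n-i) * (2*real n)^(2*i))
      else 0)"

lemma coeff_gegenbauer_poly_even_scaled:
  fixes l :: real and z :: complex
  assumes l: "0 < l" and n: "n > 0" and i: "i \<le> 2*n"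
  shows "coeff (gegenbauer_poly (of_real l) (4*n)) (2*i) * (z / of_nat (4*n))^(2*i)
    = of_real ((-1)^i * pochhammer l (2*n+i) / (fact (2*i) * fact (2*n-i) * (2*real n)^(2*i))) * z^(2*i)"
proof -
  define P where "P = pochhammer l (2*n+i)"
  define F where "F = (fact (2*i) * fact (2*n-i) :: real)"
  have "Re (of_real l :: complex) > 0" using l by simp
  from coeff_gegenbauer_poly_even[OF this i]
  have c: "coeff (gegenbauer_poly (of_real l) (4*n)) (2*i) = (-1)^i * of_real P / of_real F * 2^(2*i)"
    using i by (cases "even i") (simp_all add: pochhammer_of_real P_def F_def field_simps)
  have q: "(z / of_nat (4*n))^(2*i) * 2^(2*i) = z^(2*i) / of_real ((2*real n)^(2*i))"
  proof -
    have "z / of_nat (4*n) * 2 = z / of_real (2*real n)" using n by (simp add: field_simps)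
    then show ?thesis by (metis power_divide power_mult_distrib of_real_power)
  qed
  have "coeff (gegenbauer_poly (of_real l) (4*n)) (2*i) * (z / of_nat (4*n))^(2*i)
      = (-1)^i * of_real P / of_real F * ((z / of_nat (4*n))^(2*i) * 2^(2*i))"
    unfolding c by (simp only: mult_ac)
  also have "\<dots> = of_real ((-1)^i * P / (F * (2*real n)^(2*i))) * z^(2*i)"
    unfolding q by (simp add: field_simps)
  finally show ?thesis
    by (simp add: P_def F_def)
qed

lemma scaled_gegenbauer_taylor_term:
  fixes l :: real and z :: complex
  assumes l: "0 < l" and n: "n > 0"
  shows "of_real ((2*real n) powr (1-l) * Gamma l) * (coeff (gegenbauer_poly (of_real l) (4*n)) j * (z / of_nat (4*n))^j)
    = of_real (cos_coeff j * cos_weight l n (j div 2)) * z^j"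
proof (cases "even j")
  case True
  then obtain i where i: "j = 2*i" by blast
  show ?thesis
  proof (cases "i \<le> 2*n")
    case True
    have "cos_coeff j * cos_weight l n (j div 2) = (2*real n) powr (1-l) * Gamma l *
        ((-1)^i * pochhammer l (2*n+i) / (fact (2*i) * fact (2*n-i) * (2*real n)^(2*i)))"
      using i True by (simp add: cos_coeff_def cos_weight_def field_simps)
    then show ?thesis
      using i coeff_gegenbauer_poly_even_scaled[OF l n True] by (simp add: mult_ac)
  next
    case False
    then have "coeff (gegenbauer_poly (of_real l) (4*n)) j = 0"
      using i degree_gegenbauer_poly[of "of_real l" "4*n"] by (simp add: coeff_eq_0)
    then show ?thesis
      using i False by (simp add: cos_weight_def)
  qed
next
  case False
  then obtain i where "j = Suc (2*i)" by (metis oddE Suc_eq_plus1 add.commute)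
  moreover have "4*n = 2*(2*n)" by simp
  moreover have "Re (of_real l :: complex) > 0" using l by simp
  ultimately show ?thesis
    using False by (simp only: coeff_gegenbauer_poly_odd) (simp add: cos_coeff_def)
qed

lemma scaled_gegenbauer_eq_sum:
  fixes l :: real and z :: complex
  assumes l: "0 < l" and n: "n > 0"
  shows "of_real ((2*real n) powr (1-l) * Gamma l) * gegenbauer l (4*n) (z / of_nat (4*n))
    = (\<Sum>j\<le>4*n. of_real (cos_coeff j * cos_weight l n (j div 2)) * z^j)"
  unfolding gegenbauer_eq_poly poly_eq_sum_coeff[OF degree_gegenbauer_poly] sum_distrib_left
  by (intro sum.cong refl scaled_gegenbauer_taylor_term[OF l n])

lemma cos_weight_nonneg: "0 < l \<Longrightarrow> 0 \<le> cos_weight l n i"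
  by (simp add: cos_weight_def pochhammer_pos less_imp_le)

lemma cos_weight_Suc:
  assumes l: "0 < l" and i: "i < 2*n"
  shows "cos_weight l n (Suc i) = cos_weight l n i * ((l + 2*real n + real i) * (2*real n - real i) / (2*real n)^2)"
proof -
  have p: "pochhammer l (2*n + Suc i) = (l + 2*real n + real i) * pochhammer l (2*n + i)"
    using pochhammer_rec'[of l "2*n + i"] by (simp add: add.assoc)
  have "2*n - i = Suc (2*n - Suc i)" using i by simp
  then have f: "(fact (2*n - i) :: real) = (2*real n - real i) * fact (2*n - Suc i)"
    using i by (simp add: of_nat_diff)
  have q: "(2*real n)^(2*Suc i) = (2*real n)^(2*i) * (2*real n)^2"
    by (simp flip: power_add)
  have "2*real n - real i \<noteq> 0" "2*real n \<noteq> 0" using i by simp_all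
  then show ?thesis
    using i unfolding cos_weight_def p f q by (simp add: field_simps)
qed

lemma cos_weight_le:
  assumes l: "0 < l" "l \<le> 1"
  shows "cos_weight l n i \<le> cos_weight l n 0 * 2^i"
proof (induction i)
  case (Suc i)
  show ?case
  proof (cases "i < 2*n")
    case True
    define r where "r = (l + 2*real n + real i) * (2*real n - real i) / (2*real n)^2"
    have "(l + 2*real n + real i) * (2*real n - real i) \<le> (4*real n) * (2*real n)"
      using True l by (intro mult_mono) auto
    then have r: "0 \<le> r" "r \<le> 2"
      using True l by (simp add: r_def, simp add: r_def field_simps power2_eq_square)
    have "cos_weight l n (Suc i) = cos_weight l n i * r"
      unfolding r_def by (rule cos_weight_Suc[OF l(1) True])
    also have "\<dots> \<le> (cos_weight l n 0 * 2^i) * 2"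
      using Suc.IH r cos_weight_nonneg[OF l(1)] by (intro mult_mono) auto
    finally show ?thesis by simp
  next
    case False
    then have "cos_weight l n (Suc i) = 0" by (simp add: cos_weight_def)
    then show ?thesis using cos_weight_nonneg[OF l(1), of n 0] by simp
  qed
qed simp

lemma cos_weight_0_tendsto:
  assumes l: "0 < l"
  shows "(\<lambda>n. cos_weight l n 0) \<longlonglongrightarrow> 1"
proof -
  have "(\<lambda>N. Gamma l / Gamma_series' l N) \<longlonglongrightarrow> Gamma l / Gamma l"
    using Gamma_series'_LIMSEQ[of l] Gamma_real_pos[OF l] by (intro tendsto_divide tendsto_const) auto
  then have "(\<lambda>n. Gamma l / Gamma_series' l (2*n)) \<longlonglongrightarrow> 1"
    using LIMSEQ_subseq_LIMSEQ[of _ _ "\<lambda>n. 2*n"] Gamma_real_pos[OF l]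
    by (simp add: strict_mono_def o_def)
  moreover have "Gamma l / Gamma_series' l (2*n) = cos_weight l n 0" if "n > 0" for n
  proof -
    define N where "N = 2*n"
    have N: "N > 0" "real N = 2 * real n" using that by (simp_all add: N_def)
    have "Gamma l / Gamma_series' l N = Gamma l * pochhammer l N / (fact (N - 1) * real N powr l)"
      using N by (simp add: Gamma_series'_def powr_def)
    also have "\<dots> = cos_weight l n 0"
    proof -
      have "(fact N :: real) = real N * fact (N - 1)"
        using N by (metis fact_reduce of_nat_fact)
      moreover have "real N powr (1 - l) = real N / real N powr l"
        using N by (simp add: powr_diff)
      ultimately show ?thesis
        using N pochhammer_pos[OF l, of N] unfolding cos_weight_def N(2)[symmetric] N_def[symmetric]
        by (simp add: field_simps)
    qed
    finally show ?thesis by (simp add: N_def)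
  qed
  ultimately show ?thesis
    by (rule Lim_transform_eventually[OF _ eventually_mono[OF eventually_gt_at_top[of 0]]])
qed

lemma cos_weight_tendsto:
  assumes l: "0 < l"
  shows "(\<lambda>n. cos_weight l n i) \<longlonglongrightarrow> 1"
proof (induction i)
  case 0 show ?case by (rule cos_weight_0_tendsto[OF l])
next
  case (Suc i)
  have "(\<lambda>n. (l + 2*real n + real i) * (2*real n - real i) / (2*real n)^2) \<longlonglongrightarrow> 1"
    by real_asymp
  then have "(\<lambda>n. cos_weight l n i * ((l + 2*real n + real i) * (2*real n - real i) / (2*real n)^2)) \<longlonglongrightarrow> 1 * 1"
    by (rule tendsto_mult[OF Suc.IH])
  moreover have "\<forall>\<^sub>F n in sequentially.
      cos_weight l n i * ((l + 2*real n + real i) * (2*real n - real i) / (2*real n)^2) = cos_weight l n (Suc i)"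
    using eventually_gt_at_top[of i] by eventually_elim (simp add: cos_weight_Suc[OF l])
  ultimately show ?case by (simp add: Lim_transform_eventually)
qed

lemma cos_weight_bounded:
  assumes "0 < l" "l \<le> 1"
  obtains B where "\<And>n i. cos_weight l n i \<le> B * 2^i"
proof -
  have "Bseq (\<lambda>n. cos_weight l n 0)"
    using cos_weight_0_tendsto[OF assms(1)] by (intro convergent_imp_Bseq convergentI)
  then obtain B where "\<And>n. norm (cos_weight l n 0) \<le> B" by (blast dest: BseqD)
  then have "cos_weight l n 0 * 2^i \<le> B * 2^i" for n i
    by (intro mult_right_mono) (auto dest: abs_le_D1)
  then have "cos_weight l n i \<le> B * 2^i" for n i
    using cos_weight_le[OF assms, of n i] by (rule order_trans[rotated])
  then show ?thesis by (rule that)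
qed

lemma cos_weight_half_le:
  assumes "0 < l" and B: "\<And>n i. cos_weight l n i \<le> B * 2^i"
  shows "cos_weight l n (j div 2) \<le> B * 2^j"
proof -
  have "B \<ge> 0" using B[of n 0] cos_weight_nonneg[OF assms(1), of n 0] by simp
  then have "B * 2^(j div 2) \<le> B * 2^j" by (intro mult_left_mono power_increasing) auto
  with B show ?thesis by (rule order_trans)
qed

lemma cos_coeff_cos_weight_le:
  assumes "0 < l" and B: "\<And>n i. cos_weight l n i \<le> B * 2^i"
  shows "\<bar>cos_coeff j * cos_weight l n (j div 2)\<bar> \<le> B * 2^j / fact j"
proof -
  have "\<bar>cos_coeff j * cos_weight l n (j div 2)\<bar> = \<bar>cos_coeff j\<bar> * cos_weight l n (j div 2)"
    using cos_weight_nonneg[OF assms(1)] by (simp add: abs_mult)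
  also have "\<dots> \<le> 1 / fact j * (B * 2^j)"
    using cos_weight_half_le[OF assms] cos_weight_nonneg[OF assms(1)]
    by (intro mult_mono) (auto simp: cos_coeff_def)
  finally show ?thesis by simp
qed

lemma cos_coeff_cos_weight_beyond: "4*n < j \<Longrightarrow> cos_coeff j * cos_weight l n (j div 2) = 0"
  by (cases "even j") (auto simp: cos_coeff_def cos_weight_def)

lemma norm_scaled_gegenbauer_le_exp:
  fixes z :: complex
  assumes l: "0 < l" and B: "\<And>n i. cos_weight l n i \<le> B * 2^i" and n: "n > 0"
  shows "cmod (of_real ((2*real n) powr (1-l) * Gamma l) * gegenbauer l (4*n) (z / of_nat (4*n)))
    \<le> B * exp (2 * cmod z)"
proof -
  have "B \<ge> 0" using B[of n 0] cos_weight_nonneg[OF l, of n 0] by simp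
  have "cmod (of_real ((2*real n) powr (1-l) * Gamma l) * gegenbauer l (4*n) (z / of_nat (4*n)))
      \<le> (\<Sum>j\<le>4*n. cmod (of_real (cos_coeff j * cos_weight l n (j div 2)) * z^j))"
    unfolding scaled_gegenbauer_eq_sum[OF l n] by (rule norm_sum)
  also have "\<dots> \<le> (\<Sum>j\<le>4*n. B * ((2 * cmod z)^j / fact j))"
  proof (rule sum_mono)
    fix j
    have "cmod (of_real (cos_coeff j * cos_weight l n (j div 2)) * z^j)
        = \<bar>cos_coeff j * cos_weight l n (j div 2)\<bar> * cmod z ^ j"
      by (simp add: norm_mult norm_power abs_mult)
    also have "\<dots> \<le> B * 2^j / fact j * cmod z ^ j"
      by (intro mult_right_mono cos_coeff_cos_weight_le[OF l B]) simp
    finally show "cmod (of_real (cos_coeff j * cos_weight l n (j div 2)) * z^j) \<le> B * ((2 * cmod z)^j / fact j)"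
      by (simp add: power_mult_distrib)
  qed
  also have "\<dots> \<le> B * exp (2 * cmod z)"
    unfolding sum_distrib_left[symmetric] using \<open>B \<ge> 0\<close>
    by (intro mult_left_mono sum_power_div_fact_le_exp) auto
  finally show ?thesis .
qed

lemma cos_weight_error_le:
  assumes l: "0 < l" and B: "\<And>n i. cos_weight l n i \<le> B * 2^i" and R: "0 \<le> R"
  shows "\<bar>cos_coeff k\<bar> * R^k * \<bar>cos_weight l n (k div 2) - 1\<bar> \<le> (B + 1) * (2*R)^k / fact k"
proof -
  have "\<bar>cos_weight l n (k div 2) - 1\<bar> \<le> cos_weight l n (k div 2) + 1"
    using cos_weight_nonneg[OF l, of n "k div 2"] by simp
  also have "\<dots> \<le> B * 2^k + 2^k"
    using cos_weight_half_le[OF l B, of n k] by (intro add_mono) simp_all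
  finally have "\<bar>cos_weight l n (k div 2) - 1\<bar> \<le> (B + 1) * 2^k"
    by (simp add: algebra_simps)
  moreover have "\<bar>cos_coeff k\<bar> \<le> 1 / fact k"
    by (simp add: cos_coeff_def)
  ultimately have "\<bar>cos_coeff k\<bar> * R^k * \<bar>cos_weight l n (k div 2) - 1\<bar> \<le> 1 / fact k * R^k * ((B + 1) * 2^k)"
    using R by (intro mult_mono) auto
  then show ?thesis
    by (simp add: power_mult_distrib mult_ac)
qed

lemma summable_cos_weight_error:
  assumes "0 < l" "\<And>n i. cos_weight l n i \<le> B * 2^i" "0 \<le> R"
  shows "summable (\<lambda>k. \<bar>cos_coeff k\<bar> * R^k * \<bar>cos_weight l n (k div 2) - 1\<bar>)"
proof (rule summable_comparison_test)
  show "summable (\<lambda>k. (B + 1) * (2*R)^k / fact k)"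
    by (rule summable_mult_power_div_fact)
  show "\<exists>N. \<forall>k\<ge>N. norm (\<bar>cos_coeff k\<bar> * R^k * \<bar>cos_weight l n (k div 2) - 1\<bar>) \<le> (B + 1) * (2*R)^k / fact k"
    using cos_weight_error_le[OF assms] assms(3) by simp
qed

lemma scaled_gegenbauer_sums:
  fixes z :: complex
  assumes "0 < l" "n > 0"
  shows "(\<lambda>j. of_real (cos_coeff j * cos_weight l n (j div 2)) * z^j)
    sums (of_real ((2*real n) powr (1-l) * Gamma l) * gegenbauer l (4*n) (z / of_nat (4*n)))"
  unfolding scaled_gegenbauer_eq_sum[OF assms]
  by (rule sums_finite) (auto simp: cos_coeff_cos_weight_beyond)

lemma dist_scaled_gegenbauer_cos_le:
  fixes z :: complex
  assumes l: "0 < l" and B: "\<And>n i. cos_weight l n i \<le> B * 2^i" and n: "n > 0" and z: "cmod z \<le> R"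
  shows "dist (of_real ((2*real n) powr (1-l) * Gamma l) * gegenbauer l (4*n) (z / of_nat (4*n))) (cos z)
    \<le> (\<Sum>k. \<bar>cos_coeff k\<bar> * R^k * \<bar>cos_weight l n (k div 2) - 1\<bar>)"
proof -
  define d where "d j = of_real (cos_coeff j * (cos_weight l n (j div 2) - 1)) * z^j" for j
  have "(\<lambda>j. of_real (cos_coeff j) * z^j) sums cos z"
    using cos_converges[of z] by (simp add: scaleR_conv_of_real)
  from sums_diff[OF scaled_gegenbauer_sums[OF l n] this]
  have d: "d sums (of_real ((2*real n) powr (1-l) * Gamma l) * gegenbauer l (4*n) (z / of_nat (4*n)) - cos z)"
    unfolding d_def by (simp add: algebra_simps)
  have bound: "norm (d j) \<le> \<bar>cos_coeff j\<bar> * R^j * \<bar>cos_weight l n (j div 2) - 1\<bar>" for j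
  proof -
    have "norm (d j) = \<bar>cos_coeff j\<bar> * \<bar>cos_weight l n (j div 2) - 1\<bar> * cmod z ^ j"
      by (simp only: d_def norm_mult norm_power norm_of_real abs_mult)
    also have "\<dots> \<le> \<bar>cos_coeff j\<bar> * \<bar>cos_weight l n (j div 2) - 1\<bar> * R ^ j"
      using z by (intro mult_left_mono power_mono) auto
    finally show ?thesis by (simp add: mult_ac)
  qed
  have "0 \<le> R" using z norm_ge_zero order_trans by blast
  note summable = summable_cos_weight_error[OF l B this]
  have "summable (\<lambda>j. norm (d j))"
    by (rule summable_comparison_test[OF _ summable]) (use bound in auto)
  then have "norm (suminf d) \<le> (\<Sum>j. \<bar>cos_coeff j\<bar> * R^j * \<bar>cos_weight l n (j div 2) - 1\<bar>)"
    by (intro order_trans[OF summable_norm] suminf_le bound summable)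
  then show ?thesis
    by (simp add: dist_norm sums_unique[OF d, symmetric])
qed

lemma cos_weight_error_tendsto_0:
  assumes l: "0 < l" and B: "\<And>n i. cos_weight l n i \<le> B * 2^i" and R: "0 \<le> R"
  shows "(\<lambda>n. \<Sum>k. \<bar>cos_coeff k\<bar> * R^k * \<bar>cos_weight l n (k div 2) - 1\<bar>) \<longlonglongrightarrow> 0"
proof -
  define a where "a k n = \<bar>cos_coeff k\<bar> * R^k * \<bar>cos_weight l n (k div 2) - 1\<bar>" for k n
  define M where "M k = (B + 1) * (2*R)^k / fact k" for k
  have "(\<lambda>n. a k n) \<longlonglongrightarrow> \<bar>cos_coeff k\<bar> * R^k * \<bar>1 - 1\<bar>" for k
    unfolding a_def by (intro tendsto_intros cos_weight_tendsto[OF l])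
  then have lim: "(\<lambda>n. a k n) \<longlonglongrightarrow> 0" for k by simp
  have bound: "\<forall>\<^sub>F (k, n) in at_top \<times>\<^sub>F sequentially. norm (a k n) \<le> M k"
  proof (rule always_eventually, clarify)
    fix k n show "norm (a k n) \<le> M k"
      using cos_weight_error_le[OF l B R, of k n] R by (simp add: a_def M_def)
  qed
  have "summable M"
    unfolding M_def by (rule summable_mult_power_div_fact)
  from tannerys_theorem[where b = "\<lambda>_. 0", OF lim bound this]
  show ?thesis by (simp add: a_def)
qed

lemma scaled_gegenbauer_uniform_limit:
  assumes l: "0 < l" "l \<le> 1" and K: "compact K"
  shows "uniform_limit K (\<lambda>n z. of_real ((2*real n) powr (1-l) * Gamma l) * gegenbauer l (4*n) (z / of_nat (4*n)))
    cos sequentially"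
proof (rule uniform_limitI)
  fix e :: real assume "e > 0"
  obtain B where B: "\<And>n i. cos_weight l n i \<le> B * 2^i" using cos_weight_bounded[OF l] by metis
  obtain R where R: "0 < R" "\<And>z. z \<in> K \<Longrightarrow> cmod z \<le> R"
    using compact_imp_bounded[OF K] unfolding bounded_pos by auto
  have "\<forall>\<^sub>F n in sequentially. (\<Sum>k. \<bar>cos_coeff k\<bar> * R^k * \<bar>cos_weight l n (k div 2) - 1\<bar>) < e"
    using cos_weight_error_tendsto_0[OF l(1) B less_imp_le[OF R(1)]] \<open>e > 0\<close> by (rule order_tendstoD(2))
  with eventually_gt_at_top[of 0]
  show "\<forall>\<^sub>F n in sequentially. \<forall>z\<in>K.
      dist (of_real ((2*real n) powr (1-l) * Gamma l) * gegenbauer l (4*n) (z / of_nat (4*n))) (cos z) < e"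
  proof eventually_elim
    case (elim n)
    show ?case
      using dist_scaled_gegenbauer_cos_le[OF l(1) B elim(1) R(2)] elim(2) by (blast intro: le_less_trans)
  qed
qed

lemma norm_gegenbauer_le_cosh:
  assumes l: "0 < l" "l \<le> 1"
  shows "\<exists>D. \<forall>n>0. \<forall>z. cmod (of_real (real n powr (1-l)) * gegenbauer l (4*n) (z / of_nat (4*n)))
    \<le> D * cosh (2 * cmod z)"
proof -
  obtain B where B: "\<And>n i. cos_weight l n i \<le> B * 2^i" using cos_weight_bounded[OF l] by metis
  have "0 \<le> B" using B[of 0 0] cos_weight_nonneg[OF l(1), of 0 0] by simp
  define c where "c = 2 powr (1-l) * Gamma l"
  have "c > 0" using l by (simp add: c_def)
  have "cmod (of_real (real n powr (1-l)) * gegenbauer l (4*n) (z / of_nat (4*n))) \<le> (2*B/c) * cosh (2 * cmod z)"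
    if "n > 0" for n z
  proof -
    have "c * cmod (of_real (real n powr (1-l)) * gegenbauer l (4*n) (z / of_nat (4*n)))
        = cmod (of_real ((2*real n) powr (1-l) * Gamma l) * gegenbauer l (4*n) (z / of_nat (4*n)))"
      using l by (simp add: c_def powr_mult norm_mult abs_mult mult_ac)
    also have "\<dots> \<le> B * exp (2 * cmod z)"
      by (rule norm_scaled_gegenbauer_le_exp[OF l(1) B that])
    also have "\<dots> \<le> B * (2 * cosh (2 * cmod z))"
      using \<open>0 \<le> B\<close> by (intro mult_left_mono) (simp_all add: cosh_def)
    finally show ?thesis
      using \<open>c > 0\<close> by (simp add: field_simps)
  qed
  then show ?thesis by blast
qed

theorem lemma3p1:
  fixes \<beta> :: real
  assumes "-1/2 < \<beta>" and "\<beta> < 1/2"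
  shows "(\<exists>D. \<exists>N. \<forall>n\<ge>N. n > 0 \<longrightarrow> (\<forall>z::complex.
            cmod (complex_of_real (real n powr (1/2 - \<beta>)) *
                  gegenbauer (\<beta> + 1/2) (4 * n) (z / of_nat (4 * n)))
            \<le> D * cosh (2 * cmod z)))
       \<and> (\<forall>z::complex. (\<lambda>n. complex_of_real ((2 * real n) powr (1/2 - \<beta>) * Gamma (\<beta> + 1/2)) *
                  gegenbauer (\<beta> + 1/2) (4 * n) (z / of_nat (4 * n))) \<longlonglongrightarrow> cos z)
       \<and> (\<forall>K::complex set. compact K \<longrightarrow>
            uniform_limit K (\<lambda>n z. complex_of_real ((2 * real n) powr (1/2 - \<beta>) * Gamma (\<beta> + 1/2)) *
                  gegenbauer (\<beta> + 1/2) (4 * n) (z / of_nat (4 * n))) cos sequentially)"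
proof -
  define l where "l = \<beta> + 1/2"
  have l: "0 < l" "l \<le> 1" and e: "1/2 - \<beta> = 1 - l" using assms by (auto simp: l_def)
  have uniform: "\<forall>K::complex set. compact K \<longrightarrow>
      uniform_limit K (\<lambda>n z. complex_of_real ((2 * real n) powr (1/2 - \<beta>) * Gamma (\<beta> + 1/2)) *
        gegenbauer (\<beta> + 1/2) (4 * n) (z / of_nat (4 * n))) cos sequentially"
    unfolding e l_def[symmetric] using scaled_gegenbauer_uniform_limit[OF l] by blast
  moreover have "\<forall>z::complex. (\<lambda>n. complex_of_real ((2 * real n) powr (1/2 - \<beta>) * Gamma (\<beta> + 1/2)) *
      gegenbauer (\<beta> + 1/2) (4 * n) (z / of_nat (4 * n))) \<longlonglongrightarrow> cos z"
    using tendsto_uniform_limitI[OF uniform[rule_format, OF compact_sing]] by blast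
  moreover have "\<exists>D. \<exists>N. \<forall>n\<ge>N. n > 0 \<longrightarrow> (\<forall>z::complex.
      cmod (complex_of_real (real n powr (1/2 - \<beta>)) * gegenbauer (\<beta> + 1/2) (4 * n) (z / of_nat (4 * n)))
      \<le> D * cosh (2 * cmod z))"
    using norm_gegenbauer_le_cosh[OF l] unfolding e l_def[symmetric] by blast
  ultimately show ?thesis by blast
qed

end
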